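(* Using the principal branch of the square root, for $|z|<\ln 2$, \[ \sqrt{2e^{-z}-1}=\sum_{n=0}^{\infty}(-1)^{n+1}\Bigg[\sum_{k=0}^{n}(-1)^kS(n,k)(2k-3)!!\Bigg]\frac{z^n}{n!}, \] where $S(n,k)$ are the Stirling numbers of the second kind.
   Context: $S(n,k)$ is defined by $\frac{(e^x-1)^k}{k!}=\sum_{n\ge k}S(n,k)\frac{x^n}{n!}$, so $S(0,0)=1$ and $S(n,0)=0$ for $n\ge1$. Double factorials: $(2j-1)!!=1\cdot3\cdots(2j-1)$ for $j\ge1$. For negative odd integers, $[-(2k+1)]!!=\frac{(-1)^k}{(2k-1)!!}$ for $k\ge0$, so $(-1)!!=1$ and $(-3)!!=-1$. *)

theory Defs
  imports "HOL-Analysis.Analysis" "HOL-Combinatorics.Stirling"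
begin

text \<open>Double factorial of an odd integer m, following the paper's conventions:
  (2j-1)!! = 1*3*...*(2j-1) for j >= 1 (and (-1)!! = 1), and
  [-(2k+1)]!! = (-1)^k / (2k-1)!! for k >= 0. Only meaningful for odd m.\<close>
definition odd_dfact :: "int \<Rightarrow> real" where
  "odd_dfact m =
     (if m \<ge> -1 then (\<Prod>i = 1..nat ((m + 1) div 2). real (2 * i - 1))
      else (let k = nat ((- m - 1) div 2)
            in (-1) ^ k / (\<Prod>i = 1..k. real (2 * i - 1))))"

end

theory Submission
  imports Defs "HOL-Complex_Analysis.Complex_Analysis"
begin

(* Since csqrt w = w powr (1/2) for every w, near 0 the function is the binomial series
   (1 + V)^(1/2) composed with V(z) = 2 (e^(-z) - 1).  The power (e^(cz) - 1)^k has n-th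
   Taylor coefficient c^n k! S(n,k) / n!, so the n-th coefficient of the composition is
   (-1)^n / n! times the sum over k of (1/2 choose k) k! 2^k S(n,k), and
   (1/2 choose k) k! 2^k = 1 (-1) (-3) ... (3 - 2k) = -(-1)^k (2k-3)!!.
   For |z| < ln 2 the argument 2 e^(-z) - 1 stays off the branch cut of csqrt, so the
   function is holomorphic on that disc and equals its Taylor series there. *)

lemma fps_deriv_exp_minus_one_power:
  fixes c :: "'a::field_char_0"
  shows "fps_deriv ((fps_exp c - 1) ^ Suc k) =
           fps_const (c * of_nat (Suc k)) * ((fps_exp c - 1) ^ Suc k + (fps_exp c - 1) ^ k)"
proof -
  have "fps_deriv ((fps_exp c - 1) ^ Suc k) =
          fps_const (of_nat (Suc k)) * (fps_const c * fps_exp c) * (fps_exp c - 1) ^ k"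
    unfolding fps_deriv_power diff_Suc_1 by simp
  also have "\<dots> = fps_const (c * of_nat (Suc k))
                     * ((fps_exp c - 1) * (fps_exp c - 1) ^ k + (fps_exp c - 1) ^ k)"
    by (simp add: algebra_simps flip: fps_const_mult)
  finally show ?thesis
    by simp
qed

lemma fps_exp_minus_one_power_nth:
  fixes c :: "'a::field_char_0"
  shows "((fps_exp c - 1) ^ k) $ n = c ^ n * fact k * of_nat (Stirling n k) / fact n"
proof (induction n arbitrary: k)
  case 0
  then show ?case
    by (cases k) auto
next
  case (Suc n)
  show ?case
  proof (cases k)
    case 0
    then show ?thesis
      by simp
  next
    case (Suc j)
    have coeff_Suc: "G $ Suc n = fps_deriv G $ n / of_nat (Suc n)" for G :: "'a fps"
      by (simp add: field_simps del: of_nat_Suc)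
    have "((fps_exp c - 1) ^ Suc j) $ Suc n
            = fps_deriv ((fps_exp c - 1) ^ Suc j) $ n / of_nat (Suc n)"
      by (rule coeff_Suc)
    also have "\<dots> = c * of_nat (Suc j) * (((fps_exp c - 1) ^ Suc j) $ n + ((fps_exp c - 1) ^ j) $ n)
                     / of_nat (Suc n)"
      by (simp only: fps_deriv_exp_minus_one_power fps_mult_left_const_nth fps_add_nth)
    also have "\<dots> = c ^ Suc n * fact (Suc j) * of_nat (Stirling (Suc n) (Suc j)) / fact (Suc n)"
      by (simp only: Suc.IH Stirling.simps(4) fact_Suc) (simp add: field_simps)
    finally show ?thesis
      using Suc by simp
  qed
qed

lemma fps_compose_exp_minus_one_nth:
  fixes F :: "'a::field_char_0 fps"
  shows "(F oo fps_const b * (fps_exp c - 1)) $ n =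
           c ^ n / fact n * (\<Sum>k = 0..n. F $ k * fact k * b ^ k * of_nat (Stirling n k))"
  unfolding fps_compose_nth sum_distrib_left
  by (intro sum.cong refl)
    (simp add: power_mult_distrib fps_const_power fps_exp_minus_one_power_nth del: power_Suc)

lemma odd_dfact_recurrence:
  "odd_dfact (2 * int (Suc k) - 3) = (2 * real k - 1) * odd_dfact (2 * int k - 3)"
proof (cases k)
  case 0
  then show ?thesis
    by (simp add: odd_dfact_def)
next
  case (Suc m)
  have "nat ((2 * int k - 3 + 1) div 2) = m" "nat ((2 * int (Suc k) - 3 + 1) div 2) = Suc m"
    using Suc by simp_all
  then show ?thesis
    using Suc by (simp add: odd_dfact_def prod.nat_ivl_Suc' of_nat_diff)
qed

lemma gbinomial_half_mult_fact_two_power: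
  "((1/2 :: 'a::real_field) gchoose k) * fact k * 2 ^ k
     = - ((-1) ^ k * of_real (odd_dfact (2 * int k - 3)))"
proof (induction k)
  case 0
  then show ?case
    by (simp add: odd_dfact_def)
next
  case (Suc k)
  have "((1/2 :: 'a) gchoose Suc k) * fact (Suc k)
          = ((1/2) gchoose k) * fact k * (1/2 - of_nat k)"
    by (simp only: gbinomial_mult_fact' prod.atLeast0_lessThan_Suc)
  then have "((1/2 :: 'a) gchoose Suc k) * fact (Suc k) * 2 ^ Suc k
               = ((1/2) gchoose k) * fact k * (1/2 - of_nat k) * (2 * 2 ^ k)"
    by simp
  also have "\<dots> = ((1/2) gchoose k) * fact k * 2 ^ k * (1 - 2 * of_nat k)"
    by (simp add: field_simps)
  also have "\<dots> = - ((-1) ^ Suc k * of_real (odd_dfact (2 * int (Suc k) - 3)))"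
    unfolding Suc.IH odd_dfact_recurrence by (simp add: algebra_simps)
  finally show ?case .
qed

lemma fps_binomial_half_compose_nth:
  "(fps_binomial (1/2 :: 'a::real_field) oo fps_const 2 * (fps_exp (-1) - 1)) $ n =
     (-1) ^ (n + 1)
       * of_real (\<Sum>k = 0..n. (-1) ^ k * real (Stirling n k) * odd_dfact (2 * int k - 3))
       / fact n"
proof -
  have "(fps_binomial (1/2 :: 'a) oo fps_const 2 * (fps_exp (-1) - 1)) $ n =
          (-1) ^ n / fact n * (\<Sum>k = 0..n. - ((-1) ^ k * of_real (odd_dfact (2 * int k - 3)))
                                              * of_nat (Stirling n k))"
    by (simp only: fps_compose_exp_minus_one_nth fps_binomial_nth gbinomial_half_mult_fact_two_power)
  then show ?thesis
    by (simp add: sum_distrib_left sum_divide_distrib sum_negf algebra_simps)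
qed

lemma two_exp_minus_one_notin_nonpos_Reals:
  fixes z :: complex
  assumes "norm z < ln 2"
  shows "2 * exp (- z) - 1 \<notin> \<real>\<^sub>\<le>\<^sub>0"
proof
  assume "2 * exp (- z) - 1 \<in> \<real>\<^sub>\<le>\<^sub>0"
  then have Im: "Im (exp (- z)) = 0" and Re: "2 * Re (exp (- z)) \<le> 1"
    by (simp_all add: complex_nonpos_Reals_iff)
  have "\<bar>Im z\<bar> < pi"
    using abs_Im_le_cmod[of z] assms ln_2_less_1 pi_gt3 by linarith
  moreover have "sin (Im z) = 0"
    using Im by (simp add: Im_exp)
  ultimately have "Im z = 0"
    using sin_eq_0_pi[of "Im z"] by (auto simp: abs_less_iff)
  then have "Re (exp (- z)) = exp (- Re z)"
    by (simp add: Re_exp)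
  with Re have "exp (- Re z) \<le> 1 / 2"
    by simp
  also have "\<dots> = exp (- ln 2)"
    by (simp add: exp_minus)
  finally have "ln 2 \<le> Re z"
    by simp
  with abs_Re_le_cmod[of z] assms show False
    by linarith
qed

lemma has_fps_expansion_csqrt_two_exp_minus_one:
  "(\<lambda>z. csqrt (2 * exp (- z) - 1)) has_fps_expansion
     (fps_binomial (1/2) oo fps_const 2 * (fps_exp (-1) - 1))"
proof -
  have "(\<lambda>z :: complex. 2 * (exp (- z) - 1)) has_fps_expansion fps_const 2 * (fps_exp (-1) - 1)"
    by (intro fps_expansion_intros)
  from has_fps_expansion_compose[OF has_fps_expansion_binomial_complex[of "1/2"] this]
  have "((\<lambda>w :: complex. (1 + w) powr (1/2)) \<circ> (\<lambda>z. 2 * (exp (- z) - 1))) has_fps_expansion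
          (fps_binomial (1/2) oo fps_const 2 * (fps_exp (-1) - 1))"
    by simp
  moreover have "(\<lambda>w :: complex. (1 + w) powr (1/2)) \<circ> (\<lambda>z. 2 * (exp (- z) - 1))
                   = (\<lambda>z. csqrt (2 * exp (- z) - 1))"
    by (auto simp: csqrt_conv_powr algebra_simps)
  ultimately show ?thesis
    by (simp only:)
qed

theorem theorem3p3:
  fixes z :: complex
  assumes "norm z < ln 2"
  shows "(\<lambda>n. (-1) ^ (n + 1)
            * of_real (\<Sum>k = 0..n. (-1) ^ k * real (Stirling n k) * odd_dfact (2 * int k - 3))
            * z ^ n / of_nat (fact n))
         sums csqrt (2 * exp (- z) - 1)"
proof -
  have "(\<lambda>z. csqrt (2 * exp (- z) - 1)) holomorphic_on eball 0 (ereal (ln 2))"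
    by (auto intro!: holomorphic_intros dest: two_exp_minus_one_notin_nonpos_Reals)
  from has_fps_expansion_imp_sums_complex[OF has_fps_expansion_csqrt_two_exp_minus_one this]
  show ?thesis
    using assms by (simp add: fps_binomial_half_compose_nth)
qed

end
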